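(* Under the bilayer setting below (with $U$ even), let $\tilde\Psi_R$ be a solution of $\partial_x\tilde\Psi=A(x)\tilde\Psi$ of the form $$\tilde\Psi_R(x)=\begin{cases}\psi_R(x)+r(\theta)\psi_L(x)+\alpha_1\psi_+(x), & x<-x_0,\\ t(\theta)\psi_R(x)+\alpha_2\psi_-(x), & x>x_0,\end{cases}$$ with $r(\theta),t(\theta),\alpha_1,\alpha_2\in\mathbb{C}$ and $t(\theta)\neq0$. Then $q(\theta)=i\,\frac{r(\theta)}{t(\theta)}$ is real.
   Context: Bilayer setting: $U:\mathbb{R}\to\mathbb{R}$ piecewise continuous, supported in $[-x_0,x_0]$, even ($U(-x)=U(x)$). Fix $E>0$, $m,\hbar>0$, $\theta\in(-\pi/2,\pi/2)$; let $\kappa=\sqrt{2mE}/\hbar$, $a=\kappa\sin\theta$, $k=\kappa\cos\theta$, $\lambda=\sqrt{a^2+\kappa^2}$, $\tilde U(x)=\frac{2m}{\hbar^2}(U(x)-E)$. The ODE is $\partial_x\tilde\Psi=A(x)\tilde\Psi$ for $\tilde\Psi=(\Psi_1,\Phi_1,\Psi_2,\Phi_2)^t:\mathbb{R}\to\mathbb{C}^4$, $A(x)=\begin{pmatrix} a&1&0&0\\0&a&\tilde U(x)&0\\0&0&-a&1\\ \tilde U(x)&0&0&-a\end{pmatrix}$ (bilayer graphene equation after separation $e^{iay}$). Let $v_R=(a+ik,-\kappa^2,-(a-ik),-\kappa^2)^t$, $v_L=(a-ik,-\kappa^2,-(a+ik),-\kappa^2)^t$, $v_+=(a+\lambda,\kappa^2,a-\lambda,-\kappa^2)^t$,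 $v_-=(a-\lambda,\kappa^2,a+\lambda,-\kappa^2)^t$, and $\psi_R(x)=e^{ikx}v_R$, $\psi_L(x)=e^{-ikx}v_L$, $\psi_+(x)=e^{\lambda x}v_+$, $\psi_-(x)=e^{-\lambda x}v_-$; these solve the ODE where $U=0$. $r(\theta)$ and $t(\theta)$ are the reflection and transmission amplitudes, and $\theta$ is called magic if $r(\theta)=0$. *)

theory Defs
  imports "HOL-Analysis.Analysis"
begin

definition piecewise_continuous :: "(real \<Rightarrow> real) \<Rightarrow> bool" where
  "piecewise_continuous U \<longleftrightarrow>
     (\<exists>S. finite S \<and> continuous_on (- S) U \<and>
        (\<forall>s\<in>S. (\<exists>l. (U \<longlongrightarrow> l) (at_left s)) \<and> (\<exists>l. (U \<longlongrightarrow> l) (at_right s))))"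

definition bilayer_matrix :: "real \<Rightarrow> complex \<Rightarrow> complex^4^4" where
  "bilayer_matrix a Ut = vector [
      vector [of_real a, 1, 0, 0],
      vector [0, of_real a, Ut, 0],
      vector [0, 0, - of_real a, 1],
      vector [Ut, 0, 0, - of_real a]]"

text \<open>Solution of the ODE: continuous, and satisfying the equation away from a finite set
  (the discontinuities of the piecewise continuous potential).\<close>
definition bilayer_solution ::
  "real \<Rightarrow> (real \<Rightarrow> complex) \<Rightarrow> (real \<Rightarrow> complex^4) \<Rightarrow> bool" where
  "bilayer_solution a Ut \<Psi> \<longleftrightarrow> continuous_on UNIV \<Psi> \<and>
     (\<exists>S. finite S \<and> (\<forall>x. x \<notin> S \<longrightarrow>
        (\<Psi> has_vector_derivative (bilayer_matrix a (Ut x) *v \<Psi> x)) (at x)))"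

end

theory Submission
  imports Defs
begin

text \<open>Pair the solution at \<open>-x\<close> with the solution at \<open>x\<close> through the Hermitian form
  \<open>\<langle>v, w\<rangle> = v\<^sub>1\<^sup>* w\<^sub>2 + v\<^sub>2\<^sup>* w\<^sub>1 + v\<^sub>3\<^sup>* w\<^sub>4 + v\<^sub>4\<^sup>* w\<^sub>3\<close>. The coefficient matrix is symmetric for
  this form whenever the potential is real, so for an even potential the derivative of
  \<open>\<langle>\<Psi>(-x), \<Psi>(x)\<rangle>\<close> vanishes; the value is then constant and, by Hermitian symmetry, real.
  Evaluating it outside the support, all cross terms between the plane waves and the
  evanescent waves cancel and what remains is \<open>-4i\<kappa>\<^sup>2k r\<^sup>* t\<close>, so \<open>i r\<^sup>* t\<close> is real,
  which is the same as \<open>i r / t\<close> being real.\<close>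

definition bilayer_pairing :: "complex^4 \<Rightarrow> complex^4 \<Rightarrow> complex" where
  "bilayer_pairing v w =
     cnj (v$1) * w$2 + cnj (v$2) * w$1 + cnj (v$3) * w$4 + cnj (v$4) * w$3"

lemma vector_4_nth [simp]:
  "(vector [x1, x2, x3, x4] :: 'a::zero^4) $ 1 = x1"
  "(vector [x1, x2, x3, x4] :: 'a::zero^4) $ 2 = x2"
  "(vector [x1, x2, x3, x4] :: 'a::zero^4) $ 3 = x3"
  "(vector [x1, x2, x3, x4] :: 'a::zero^4) $ 4 = x4"
  by (simp_all add: vector_def)

lemma cnj_bilayer_pairing: "cnj (bilayer_pairing v w) = bilayer_pairing w v"
  by (simp add: bilayer_pairing_def algebra_simps)

lemma bilayer_matrix_mult_nth:
  fixes v :: "complex^4"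
  shows "(bilayer_matrix a u *v v) $ 1 = of_real a * v$1 + v$2"
    "(bilayer_matrix a u *v v) $ 2 = of_real a * v$2 + u * v$3"
    "(bilayer_matrix a u *v v) $ 3 = - of_real a * v$3 + v$4"
    "(bilayer_matrix a u *v v) $ 4 = u * v$1 - of_real a * v$4"
  by (simp_all add: bilayer_matrix_def matrix_vector_mult_def sum_4)

lemma bilayer_pairing_matrix_symmetric:
  assumes "u \<in> \<real>"
  shows "bilayer_pairing (bilayer_matrix a u *v v) w = bilayer_pairing v (bilayer_matrix a u *v w)"
proof -
  have "cnj u = u" using assms by (simp add: Reals_cnj_iff)
  then show ?thesis
    by (simp add: bilayer_pairing_def bilayer_matrix_mult_nth algebra_simps)
qed

lemma has_vector_derivative_bilayer_pairing:
  assumes "(f has_vector_derivative f') (at x)" "(g has_vector_derivative g') (at x)"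
  shows "((\<lambda>x. bilayer_pairing (f x) (g x)) has_vector_derivative
           bilayer_pairing f' (g x) + bilayer_pairing (f x) g') (at x)"
proof -
  have nth: "((\<lambda>x. h x $ i) has_vector_derivative h' $ i) (at x)"
    if "(h has_vector_derivative h') (at x)" for h :: "real \<Rightarrow> complex^4" and h' i
    using bounded_linear.has_vector_derivative[OF bounded_linear_vec_nth that] .
  have product: "((\<lambda>x. cnj (f x $ i) * g x $ j) has_vector_derivative
                cnj (f x $ i) * g' $ j + cnj (f' $ i) * g x $ j) (at x)" for i j
    by (intro has_vector_derivative_mult has_vector_derivative_cnj nth assms)
  show ?thesis
    unfolding bilayer_pairing_def
    by (rule has_vector_derivative_eq_rhs[OF has_vector_derivative_add[OF
          has_vector_derivative_add[OF has_vector_derivative_add[OF product product] product]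
          product]])
      (simp add: algebra_simps)
qed

lemma has_vector_derivative_reflect:
  assumes "(f has_vector_derivative f') (at (- x))"
  shows "((\<lambda>x. f (- x)) has_vector_derivative - f') (at x)"
proof -
  have "(uminus has_vector_derivative (-1::real)) (at x)"
    by (auto intro!: derivative_eq_intros)
  from vector_diff_chain_at[OF this assms] show ?thesis
    by (simp add: o_def)
qed

lemma bilayer_reflection_pairing_constant:
  assumes sol: "bilayer_solution a Ut \<Psi>"
    and even: "\<And>x. Ut (- x) = Ut x" and real: "\<And>x. Ut x \<in> \<real>"
  shows "(\<lambda>x. bilayer_pairing (\<Psi> (- x)) (\<Psi> x)) constant_on UNIV"
proof -
  from sol obtain S where cont: "continuous_on UNIV \<Psi>" and "finite S"
    and der: "\<And>x. x \<notin> S \<Longrightarrow>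
                (\<Psi> has_vector_derivative (bilayer_matrix a (Ut x) *v \<Psi> x)) (at x)"
    unfolding bilayer_solution_def by blast
  have "((\<lambda>x. bilayer_pairing (\<Psi> (- x)) (\<Psi> x)) has_derivative (\<lambda>h. 0)) (at x)"
    if "x \<notin> S \<union> uminus ` S" for x
  proof -
    have "x \<notin> S" "- x \<notin> S"
      using that by (auto simp: image_iff)
    from has_vector_derivative_bilayer_pairing
           [OF has_vector_derivative_reflect[OF der[OF \<open>- x \<notin> S\<close>]] der[OF \<open>x \<notin> S\<close>]]
    have "((\<lambda>x. bilayer_pairing (\<Psi> (- x)) (\<Psi> x)) has_vector_derivative 0) (at x)"
      using bilayer_pairing_matrix_symmetric[OF real] even
      by (simp add: bilayer_pairing_def algebra_simps)
    then show ?thesis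
      by (simp add: has_vector_derivative_def)
  qed
  moreover have "continuous_on UNIV (\<lambda>x. bilayer_pairing (\<Psi> (- x)) (\<Psi> x))"
    unfolding bilayer_pairing_def
    by (intro continuous_intros continuous_on_component continuous_on_compose2[OF cont]) auto
  ultimately show ?thesis
    using \<open>finite S\<close>
    by (intro has_derivative_zero_connected_constant_on[where K = "S \<union> uminus ` S"]) auto
qed

corollary bilayer_reflection_pairing_real:
  assumes "bilayer_solution a Ut \<Psi>" "\<And>x. Ut (- x) = Ut x" "\<And>x. Ut x \<in> \<real>"
  shows "bilayer_pairing (\<Psi> (- x)) (\<Psi> x) \<in> \<real>"
proof -
  obtain c where "\<And>x. bilayer_pairing (\<Psi> (- x)) (\<Psi> x) = c"
    using bilayer_reflection_pairing_constant[OF assms] by (auto simp: constant_on_def)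
  then have "bilayer_pairing (\<Psi> (- x)) (\<Psi> x) = bilayer_pairing (\<Psi> (- (- x))) (\<Psi> (- x))"
    by metis
  also have "\<dots> = cnj (bilayer_pairing (\<Psi> (- x)) (\<Psi> x))"
    by (simp add: cnj_bilayer_pairing)
  finally show ?thesis
    by (simp add: Reals_cnj_iff)
qed

lemma bilayer_pairing_scattering_state:
  fixes a k lam \<kappa> :: real and e f r t \<alpha>1 \<alpha>2 :: complex
  defines "vR \<equiv> vector [complex_of_real a + \<i> * k, - complex_of_real (\<kappa>^2),
                          - (complex_of_real a - \<i> * k), - complex_of_real (\<kappa>^2)] :: complex^4"
  defines "vL \<equiv> vector [complex_of_real a - \<i> * k, - complex_of_real (\<kappa>^2),
                          - (complex_of_real a + \<i> * k), - complex_of_real (\<kappa>^2)] :: complex^4"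
  defines "vP \<equiv> vector [complex_of_real (a + lam), complex_of_real (\<kappa>^2),
                          complex_of_real (a - lam), - complex_of_real (\<kappa>^2)] :: complex^4"
  defines "vM \<equiv> vector [complex_of_real (a - lam), complex_of_real (\<kappa>^2),
                          complex_of_real (a + lam), - complex_of_real (\<kappa>^2)] :: complex^4"
  assumes "cnj e * e = 1" and "cnj f = f"
  shows "bilayer_pairing (cnj e *s vR + r *s (e *s vL) + \<alpha>1 *s (f *s vP))
                         (t *s (e *s vR) + \<alpha>2 *s (f *s vM))
         = - 4 * \<i> * of_real (\<kappa>^2 * k) * cnj r * t"
  using assms by (simp add: bilayer_pairing_def algebra_simps)

lemma i_mult_divide_in_Reals:
  assumes "\<i> * cnj r * t \<in> \<real>"
  shows "\<i> * r / t \<in> \<real>"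
proof -
  have "\<i> * r * cnj t = - cnj (\<i> * cnj r * t)"
    by simp
  also have "\<dots> = - (\<i> * cnj r * t)"
    using assms by (simp only: Reals_cnj_iff)
  finally have "\<i> * r * cnj t \<in> \<real>"
    using assms by simp
  moreover have "\<i> * r / t = \<i> * r * cnj t / of_real ((cmod t)^2)"
    by (cases "t = 0") (simp_all add: complex_norm_square del: of_real_power)
  ultimately show ?thesis
    by simp
qed

theorem proposition3:
  fixes U :: "real \<Rightarrow> real" and x0 E m hbar \<theta> :: real
    and \<Psi> :: "real \<Rightarrow> complex^4" and r t \<alpha>1 \<alpha>2 :: complex
  assumes pc: "piecewise_continuous U"
    and supp: "\<forall>x. \<bar>x\<bar> > x0 \<longrightarrow> U x = 0"
    and even: "\<forall>x. U (- x) = U x"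
    and E: "E > 0" and m: "m > 0" and hbar: "hbar > 0"
    and \<theta>: "- (pi/2) < \<theta>" "\<theta> < pi/2"
  defines "\<kappa> \<equiv> sqrt (2 * m * E) / hbar"
  defines "a \<equiv> \<kappa> * sin \<theta>"
  defines "k \<equiv> \<kappa> * cos \<theta>"
  defines "lam \<equiv> sqrt (a^2 + \<kappa>^2)"
  defines "Ut \<equiv> (\<lambda>x. complex_of_real (2 * m / hbar^2 * (U x - E)))"
  defines "vR \<equiv> vector [complex_of_real a + \<i> * k, - complex_of_real (\<kappa>^2),
                          - (complex_of_real a - \<i> * k), - complex_of_real (\<kappa>^2)] :: complex^4"
  defines "vL \<equiv> vector [complex_of_real a - \<i> * k, - complex_of_real (\<kappa>^2),
                          - (complex_of_real a + \<i> * k), - complex_of_real (\<kappa>^2)] :: complex^4"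
  defines "vP \<equiv> vector [complex_of_real (a + lam), complex_of_real (\<kappa>^2),
                          complex_of_real (a - lam), - complex_of_real (\<kappa>^2)] :: complex^4"
  defines "vM \<equiv> vector [complex_of_real (a - lam), complex_of_real (\<kappa>^2),
                          complex_of_real (a + lam), - complex_of_real (\<kappa>^2)] :: complex^4"
  assumes sol: "bilayer_solution a Ut \<Psi>"
    and left: "\<forall>x. x < - x0 \<longrightarrow>
       \<Psi> x = exp (\<i> * of_real (k * x)) *s vR + r *s (exp (- \<i> * of_real (k * x)) *s vL)
              + \<alpha>1 *s (exp (of_real (lam * x)) *s vP)"
    and right: "\<forall>x. x > x0 \<longrightarrow>
       \<Psi> x = t *s (exp (\<i> * of_real (k * x)) *s vR) + \<alpha>2 *s (exp (- of_real (lam * x)) *s vM)"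
    and tnz: "t \<noteq> 0"
  shows "\<i> * r / t \<in> \<real>"
proof -
  define y where "y = \<bar>x0\<bar> + 1"
  have "- y < - x0" "x0 < y"
    by (simp_all add: y_def)
  have "bilayer_pairing (\<Psi> (- y)) (\<Psi> y) \<in> \<real>"
    using bilayer_reflection_pairing_real[OF sol] even by (simp add: Ut_def)
  also have "bilayer_pairing (\<Psi> (- y)) (\<Psi> y) = - 4 * of_real (\<kappa>^2 * k) * (\<i> * cnj r * t)"
  proof -
    define e where "e = exp (\<i> * of_real (k * y))"
    define f where "f = exp (- complex_of_real (lam * y))"
    have "\<Psi> (- y) = cnj e *s vR + r *s (e *s vL) + \<alpha>1 *s (f *s vP)"
      using left[rule_format, of "- y"] \<open>- y < - x0\<close> by (simp add: e_def f_def exp_cnj)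
    moreover have "\<Psi> y = t *s (e *s vR) + \<alpha>2 *s (f *s vM)"
      using right[rule_format, of y] \<open>x0 < y\<close> by (simp add: e_def f_def)
    moreover have "cnj e * e = 1" "cnj f = f"
      by (simp_all add: e_def f_def exp_cnj flip: exp_add)
    ultimately show ?thesis
      using bilayer_pairing_scattering_state[where a = a and k = k and lam = lam and \<kappa> = \<kappa>]
      by (simp add: vR_def vL_def vP_def vM_def)
  qed
  finally have "- 4 * of_real (\<kappa>^2 * k) * (\<i> * cnj r * t) \<in> \<real>" .
  moreover have "\<kappa> > 0" "cos \<theta> > 0"
    using E m hbar \<theta> by (auto simp: \<kappa>_def intro!: cos_gt_zero_pi)
  then have "- 4 * complex_of_real (\<kappa>^2 * k) \<noteq> 0"
    by (simp add: k_def)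
  ultimately have "\<i> * cnj r * t \<in> \<real>"
    by (metis Reals_divide Reals_minus Reals_mult Reals_numeral Reals_of_real
        nonzero_mult_div_cancel_left)
  then show ?thesis
    by (rule i_mult_divide_in_Reals)
qed

end
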